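(* Let $k\geq 3$ be an integer. Then every hypomatchable graph $G$ with $|V(G)|\geq 2k+1$ that has no $\{P_{2},P_{2k+1}\}$-factor contains a set $X\subseteq V(G)$ with $|X|\geq 5$ such that $$\sum_{0\leq j\leq k-1} c_{2j+1}(G-X)\geq \frac{1}{k^{2}}|X|.$$ In other words, $\left(\frac{1}{k^{2}},5\right)$ is a $(k,\{P_{2},P_{2k+1}\})$-good pair.
   Context: A graph $H$ is hypomatchable if $H-u$ has a perfect matching for every $u\in V(H)$. For a graph $H$ and $j\geq 1$, $c_{j}(H)$ is the number of components of $H$ with exactly $j$ vertices. For an integer $k\geq 1$ and a set $\mathcal{F}$ of connected graphs with $P_2\in\mathcal{F}$, a pair $(\varepsilon,\lambda)$ with $\varepsilon>0$ real and $\lambda$ a positive integer is called $(k,\mathcal{F})$-good if every hypomatchable graph $G$ of order at least $2k+1$ having no $\mathcal{F}$-factor has a set $X\subseteq V(G)$ with $|X|\geq\lambda$ and $\sum_{0\leq j\leq k-1}c_{2j+1}(G-X)\geq \varepsilon|X|$. An $\mathcal{F}$-factor is a spanning subgraph each of whose components is isomorphic to a member of $\mathcal{F}$. *)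

theory Defs
  imports Complex_Main
begin

definition simple_graph :: "'a set \<Rightarrow> 'a set set \<Rightarrow> bool" where
  "simple_graph V E \<longleftrightarrow> finite V \<and> (\<forall>e\<in>E. e \<subseteq> V \<and> card e = 2)"

definition del_verts_E :: "'a set \<Rightarrow> 'a set set \<Rightarrow> 'a set set" where
  "del_verts_E X E = {e \<in> E. e \<inter> X = {}}"

definition perfect_matching :: "'a set \<Rightarrow> 'a set set \<Rightarrow> 'a set set \<Rightarrow> bool" where
  "perfect_matching V E M \<longleftrightarrow> M \<subseteq> E \<and> (\<forall>v\<in>V. \<exists>!e. e \<in> M \<and> v \<in> e)"

definition hypomatchable :: "'a set \<Rightarrow> 'a set set \<Rightarrow> bool" where
  "hypomatchable V E \<longleftrightarrow>
     (\<forall>u\<in>V. \<exists>M. perfect_matching (V - {u}) (del_verts_E {u} E) M)"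

definition adj :: "'a set set \<Rightarrow> 'a \<Rightarrow> 'a \<Rightarrow> bool" where
  "adj E x y \<longleftrightarrow> {x, y} \<in> E"

definition components :: "'a set \<Rightarrow> 'a set set \<Rightarrow> 'a set set" where
  "components V E = {{y \<in> V. (adj E)\<^sup>*\<^sup>* x y} | x. x \<in> V}"

definition comp_count :: "nat \<Rightarrow> 'a set \<Rightarrow> 'a set set \<Rightarrow> nat" where
  "comp_count j V E = card {C \<in> components V E. card C = j}"

definition is_path_on :: "nat \<Rightarrow> 'a set \<Rightarrow> 'a set set \<Rightarrow> bool" where
  "is_path_on n C F \<longleftrightarrow> (\<exists>vs. distinct vs \<and> set vs = C \<and> length vs = n \<and>
      F = {{vs ! i, vs ! Suc i} | i. Suc i < n})"

definition has_path_factor :: "nat \<Rightarrow> 'a set \<Rightarrow> 'a set set \<Rightarrow> bool" where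
  "has_path_factor k V E \<longleftrightarrow> (\<exists>F. F \<subseteq> E \<and>
     (\<forall>C\<in>components V F. is_path_on 2 C {e \<in> F. e \<subseteq> C}
                          \<or> is_path_on (2*k+1) C {e \<in> F. e \<subseteq> C}))"

end

theory Submission
  imports Defs
begin

text \<open>Fix a vertex v and a perfect matching M of G - v, and grow a path from v two vertices
  at a time: from the last vertex go along an edge of G to a new vertex x, then along the
  M-edge of x to its partner y. The partner is new as well, because every path vertex other
  than v has its partner on the path. A path with 2k+1 vertices, together with the M-edges
  avoiding it, is a {P_2, P_{2k+1}}-factor. Without such a factor the growth therefore gets
  stuck at a last vertex b whose neighbours all lie among the at most 2k other path vertices.
  Padding them to a set X of max(5, |path| - 1) \<le> k^2 vertices avoiding b leaves b isolated
  in G - X, so the sum is at least c_1(G - X) \<ge> 1 \<ge> |X|/k^2.\<close>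

fun path_edges :: "'a list \<Rightarrow> 'a set set" where
  "path_edges (a # b # vs) = insert {a, b} (path_edges (b # vs))"
| "path_edges _ = {}"

lemma path_edges_conv_nth:
  "path_edges vs = {{vs ! i, vs ! Suc i} | i. Suc i < length vs}"
proof (induction vs rule: path_edges.induct)
  case (1 a b vs)
  have "{{(a # b # vs) ! i, (a # b # vs) ! Suc i} | i. Suc i < length (a # b # vs)}
      = insert {a, b} {{(b # vs) ! i, (b # vs) ! Suc i} | i. Suc i < length (b # vs)}"
    by (auto simp: less_Suc_eq_0_disj) (metis nth_Cons_0, metis nth_Cons_Suc)
  with 1 show ?case by simp
qed auto

lemma is_path_on_path_edges:
  "distinct vs \<Longrightarrow> is_path_on (length vs) (set vs) (path_edges vs)"
  by (auto simp: is_path_on_def path_edges_conv_nth)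

lemma path_edges_subset: "e \<in> path_edges vs \<Longrightarrow> e \<subseteq> set vs"
  by (induction vs rule: path_edges.induct) auto

lemma path_edges_nonempty: "e \<in> path_edges vs \<Longrightarrow> e \<noteq> {}"
  by (induction vs rule: path_edges.induct) auto

lemma path_edges_snoc:
  "vs \<noteq> [] \<Longrightarrow> path_edges (vs @ [x]) = insert {last vs, x} (path_edges vs)"
  by (induction vs rule: path_edges.induct) auto

lemma rtranclp_adj_mono: "(adj F)\<^sup>*\<^sup>* x y \<Longrightarrow> F \<subseteq> F' \<Longrightarrow> (adj F')\<^sup>*\<^sup>* x y"
  by (erule rtranclp_mono[THEN predicate2D, rotated]) (auto simp: adj_def)

lemma rtranclp_adj_sym: "(adj F)\<^sup>*\<^sup>* x y \<Longrightarrow> (adj F)\<^sup>*\<^sup>* y x"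
proof -
  assume "(adj F)\<^sup>*\<^sup>* x y"
  then have "(adj F)\<inverse>\<inverse>\<^sup>*\<^sup>* y x" by (rule rtranclp_converseI)
  moreover have "(adj F)\<inverse>\<inverse> = adj F" by (auto simp: adj_def insert_commute fun_eq_iff)
  ultimately show ?thesis by simp
qed

lemma rtranclp_adj_path_edges_hd:
  "p \<in> set vs \<Longrightarrow> (adj (path_edges vs))\<^sup>*\<^sup>* (hd vs) p"
proof (induction vs rule: path_edges.induct)
  case (1 a b vs)
  show ?case
  proof (cases "p = a")
    case False
    with "1.prems" have "(adj (path_edges (b # vs)))\<^sup>*\<^sup>* b p" using "1.IH" by simp
    then have "(adj (path_edges (a # b # vs)))\<^sup>*\<^sup>* b p" by (rule rtranclp_adj_mono) auto
    moreover have "adj (path_edges (a # b # vs)) a b" by (simp add: adj_def)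
    ultimately have "(adj (path_edges (a # b # vs)))\<^sup>*\<^sup>* a p"
      by (meson converse_rtranclp_into_rtranclp)
    then show ?thesis by simp
  qed simp
qed auto

lemma component_eq:
  assumes "x \<in> S" "S \<subseteq> V"
    and closed: "\<And>a b. a \<in> S \<Longrightarrow> adj F a b \<Longrightarrow> b \<in> S"
    and connected: "\<And>y. y \<in> S \<Longrightarrow> (adj F)\<^sup>*\<^sup>* x y"
  shows "{y \<in> V. (adj F)\<^sup>*\<^sup>* x y} = S"
proof -
  have "y \<in> S" if "(adj F)\<^sup>*\<^sup>* x y" for y
    using that by (induction rule: rtranclp_induct) (auto intro: assms(1) closed)
  with assms(2) connected show ?thesis by auto
qed

lemma simple_graph_edge_neq: "simple_graph V E \<Longrightarrow> {x, y} \<in> E \<Longrightarrow> x \<noteq> y"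
  by (fastforce simp: simple_graph_def)

lemma isolated_vertex_comp_count:
  assumes "simple_graph V E" "b \<in> V - X" "\<And>z. {b, z} \<in> E \<Longrightarrow> z \<in> X"
  shows "1 \<le> comp_count 1 (V - X) (del_verts_E X E)"
proof -
  let ?E = "del_verts_E X E"
  have "{y \<in> V - X. (adj ?E)\<^sup>*\<^sup>* b y} = {b}"
    by (rule component_eq) (use assms in \<open>auto simp: adj_def del_verts_E_def\<close>)
  then have "{b} \<in> {C \<in> components (V - X) ?E. card C = 1}"
    using assms(2) unfolding components_def by force
  moreover have "finite (components (V - X) ?E)"
    using assms(1) finite_subset[of "components (V - X) ?E" "Pow (V - X)"]
    by (auto simp: components_def simple_graph_def)
  ultimately have "{C \<in> components (V - X) ?E. card C = 1} \<noteq> {}"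
    "finite {C \<in> components (V - X) ?E. card C = 1}" by auto
  then show ?thesis unfolding comp_count_def by (simp add: Suc_le_eq card_gt_0_iff)
qed

locale near_perfect_matching =
  fixes V :: "'a set" and E :: "'a set set" and M :: "'a set set" and v :: 'a
  assumes simple: "simple_graph V E" and root_in_V: "v \<in> V"
    and matching_subset: "M \<subseteq> E"
    and root_unmatched: "\<And>e. e \<in> M \<Longrightarrow> v \<notin> e"
    and matched_uniquely: "\<And>u. u \<in> V - {v} \<Longrightarrow> \<exists>!e. e \<in> M \<and> u \<in> e"

lemma hypomatchable_near_perfect_matching:
  assumes "simple_graph V E" "hypomatchable V E" "v \<in> V"
  obtains M where "near_perfect_matching V E M v"
proof -
  obtain M where "perfect_matching (V - {v}) (del_verts_E {v} E) M"
    using assms(2,3) unfolding hypomatchable_def by blast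
  then have "near_perfect_matching V E M v"
    using assms(1,3)
    by unfold_locales (auto simp: perfect_matching_def del_verts_E_def)
  then show thesis by (rule that)
qed

context near_perfect_matching
begin

lemma edge_subset_V: "e \<in> E \<Longrightarrow> e \<subseteq> V"
  using simple by (auto simp: simple_graph_def)

lemma matching_edgeE:
  assumes "e \<in> M" "x \<in> e"
  obtains y where "e = {x, y}" "x \<noteq> y" "y \<in> V"
proof -
  have "e \<subseteq> V" "card e = 2"
    using assms(1) matching_subset simple by (auto simp: simple_graph_def)
  then obtain a b where "e = {a, b}" "a \<noteq> b" by (auto simp: card_2_iff)
  with assms(2) \<open>e \<subseteq> V\<close> show thesis
    using that[of a] that[of b] by (cases "x = a") (auto simp: insert_commute)
qed

lemma matching_edge_unique:
  assumes "e \<in> M" "e' \<in> M" "u \<in> e" "u \<in> e'"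
  shows "e = e'"
proof -
  have "u \<in> V" using assms(1,3) matching_subset edge_subset_V by blast
  moreover have "u \<noteq> v" using assms(1,3) root_unmatched by blast
  ultimately show ?thesis using matched_uniquely[of u] assms by blast
qed

text \<open>Only the invariant needed for growing is recorded: the matching partner of every path
  vertex other than v is on the path.\<close>
definition alternating_path :: "'a list \<Rightarrow> bool" where
  "alternating_path vs \<longleftrightarrow> distinct vs \<and> set vs \<subseteq> V \<and> vs \<noteq> [] \<and> hd vs = v
     \<and> path_edges vs \<subseteq> E \<and> (\<forall>u \<in> set vs - {v}. \<exists>w \<in> set vs. {u, w} \<in> M)"

lemma root_in_alternating_path: "alternating_path vs \<Longrightarrow> v \<in> set vs"
  by (auto simp: alternating_path_def intro: hd_in_set)

lemma matching_edge_within_alternating_path: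
  assumes "alternating_path vs" "e \<in> M" "y \<in> e" "y \<in> set vs"
  shows "e \<subseteq> set vs"
proof -
  have "y \<noteq> v" using assms(2,3) root_unmatched by auto
  then obtain w where "w \<in> set vs" "{y, w} \<in> M"
    using assms(1,4) unfolding alternating_path_def by blast
  moreover from this have "e = {y, w}" using assms(2,3) matching_edge_unique[of e "{y, w}" y] by auto
  ultimately show ?thesis using assms(4) by auto
qed

lemma alternating_path_extend:
  assumes "alternating_path vs" "{last vs, x} \<in> E" "x \<notin> set vs"
  obtains y where "alternating_path (vs @ [x, y])"
proof -
  have ne: "vs \<noteq> []" using assms(1) by (simp add: alternating_path_def)
  have "x \<in> V" using assms(2) edge_subset_V by blast
  moreover have "x \<noteq> v" using assms(1,3) root_in_alternating_path by blast
  ultimately obtain e where e: "e \<in> M" "x \<in> e" using matched_uniquely by blast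
  then obtain y where y: "e = {x, y}" "x \<noteq> y" "y \<in> V" by (rule matching_edgeE)
  have "y \<notin> set vs"
    using matching_edge_within_alternating_path[OF assms(1) e(1)] assms(3) y by blast
  moreover have "path_edges (vs @ [x, y]) = insert {x, y} (insert {last vs, x} (path_edges vs))"
    using path_edges_snoc[of "vs @ [x]" y] path_edges_snoc[of vs x] ne by simp
  moreover have "{x, y} \<in> E" using e y matching_subset by auto
  moreover have "\<exists>w \<in> set (vs @ [x, y]). {u, w} \<in> M" if u: "u \<in> set (vs @ [x, y]) - {v}" for u
  proof (cases "u \<in> set vs")
    case True
    then show ?thesis using u assms(1) unfolding alternating_path_def by auto
  next
    case False
    then have "u = x \<or> u = y" using u by auto
    then show ?thesis using e y by (auto simp: insert_commute)
  qed
  ultimately have "alternating_path (vs @ [x, y])"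
    using assms \<open>x \<in> V\<close> y unfolding alternating_path_def by auto
  then show thesis by (rule that)
qed

lemma alternating_path_long_or_stuck:
  assumes "m \<le> k"
  shows "(\<exists>vs. alternating_path vs \<and> length vs = 2 * m + 1) \<or>
    (\<exists>vs. alternating_path vs \<and> length vs \<le> 2 * k \<and> (\<forall>x. {last vs, x} \<in> E \<longrightarrow> x \<in> set vs))"
  using assms
proof (induction m)
  case 0
  have "alternating_path [v]" using root_in_V by (simp add: alternating_path_def)
  then show ?case by fastforce
next
  case (Suc m)
  show ?case
  proof (cases "\<exists>vs. alternating_path vs \<and> length vs = 2 * m + 1")
    case True
    then obtain vs where vs: "alternating_path vs" "length vs = 2 * m + 1" by blast
    show ?thesis
    proof (cases "\<forall>x. {last vs, x} \<in> E \<longrightarrow> x \<in> set vs")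
      case True
      then show ?thesis using vs Suc.prems by auto
    next
      case False
      then obtain x where "{last vs, x} \<in> E" "x \<notin> set vs" by blast
      then obtain y where "alternating_path (vs @ [x, y])"
        using alternating_path_extend vs(1) by blast
      then show ?thesis using vs(2) by fastforce
    qed
  qed (use Suc in auto)
qed

definition path_factor :: "'a list \<Rightarrow> 'a set set" where
  "path_factor vs = path_edges vs \<union> {e \<in> M. e \<inter> set vs = {}}"

lemma matching_edge_nonempty: "e \<in> M \<Longrightarrow> e \<noteq> {}"
  using matching_subset simple by (fastforce simp: simple_graph_def)

lemma path_factor_component_on_path:
  assumes "alternating_path vs" "x \<in> set vs"
  shows "{y \<in> V. (adj (path_factor vs))\<^sup>*\<^sup>* x y} = set vs"
proof (rule component_eq)
  show "set vs \<subseteq> V" using assms(1) by (simp add: alternating_path_def)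
  show "b \<in> set vs" if "a \<in> set vs" "adj (path_factor vs) a b" for a b
    using that path_edges_subset[of "{a, b}" vs] by (auto simp: adj_def path_factor_def)
  show "(adj (path_factor vs))\<^sup>*\<^sup>* x y" if "y \<in> set vs" for y
  proof -
    have "(adj (path_edges vs))\<^sup>*\<^sup>* x y"
      using rtranclp_adj_path_edges_hd rtranclp_adj_sym rtranclp_trans assms(2) that by metis
    then show ?thesis by (rule rtranclp_adj_mono) (auto simp: path_factor_def)
  qed
qed fact

lemma path_factor_edges_on_path: "{e \<in> path_factor vs. e \<subseteq> set vs} = path_edges vs"
proof -
  have "e \<notin> M" if "e \<subseteq> set vs" "e \<inter> set vs = {}" for e
    using that matching_edge_nonempty by blast
  then show ?thesis using path_edges_subset by (auto simp: path_factor_def)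
qed

lemma path_factor_component_off_path:
  assumes "alternating_path vs" "x \<in> V - set vs"
  obtains y where "{y \<in> V. (adj (path_factor vs))\<^sup>*\<^sup>* x y} = {x, y}"
    "{e \<in> path_factor vs. e \<subseteq> {x, y}} = {{x, y}}" "x \<noteq> y"
proof -
  have "x \<noteq> v" using assms root_in_alternating_path by blast
  then obtain e where e: "e \<in> M" "x \<in> e" using assms(2) matched_uniquely by blast
  then obtain y where y: "e = {x, y}" "x \<noteq> y" "y \<in> V" by (rule matching_edgeE)
  have off: "e \<inter> set vs = {}"
    using matching_edge_within_alternating_path[OF assms(1) e(1)] e(2) assms(2) by blast
  then have "e \<in> path_factor vs" using e(1) by (simp add: path_factor_def)
  have edge: "e' = e" if "e' \<in> path_factor vs" "e' \<inter> e \<noteq> {}" for e'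
  proof (cases "e' \<in> path_edges vs")
    case True
    then show ?thesis using that(2) off path_edges_subset by blast
  next
    case False
    then show ?thesis using that e(1) matching_edge_unique by (auto simp: path_factor_def)
  qed
  have "{z \<in> V. (adj (path_factor vs))\<^sup>*\<^sup>* x z} = {x, y}"
  proof (rule component_eq)
    show "b \<in> {x, y}" if "a \<in> {x, y}" "adj (path_factor vs) a b" for a b
      using that edge[of "{a, b}"] y(1) by (auto simp: adj_def)
    show "(adj (path_factor vs))\<^sup>*\<^sup>* x z" if "z \<in> {x, y}" for z
      using that \<open>e \<in> path_factor vs\<close> y(1) by (auto simp: adj_def)
  qed (use assms(2) y in auto)
  moreover have "{e' \<in> path_factor vs. e' \<subseteq> {x, y}} = {{x, y}}"
  proof -
    have "e' \<noteq> {}" if "e' \<in> path_factor vs" for e'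
      using that path_edges_nonempty matching_edge_nonempty by (auto simp: path_factor_def)
    then have "e' = e" if "e' \<in> path_factor vs" "e' \<subseteq> e" for e'
      using that edge by blast
    then show ?thesis using \<open>e \<in> path_factor vs\<close> y(1) by auto
  qed
  ultimately show thesis using y(2) by (rule that)
qed

lemma has_path_factor_if_long_alternating_path:
  assumes "alternating_path vs" "length vs = 2 * k + 1"
  shows "has_path_factor k V E"
  unfolding has_path_factor_def
proof (intro exI conjI ballI)
  show "path_factor vs \<subseteq> E"
    using assms(1) matching_subset by (auto simp: path_factor_def alternating_path_def)
  fix C assume "C \<in> components V (path_factor vs)"
  then obtain x where "x \<in> V" and C: "C = {y \<in> V. (adj (path_factor vs))\<^sup>*\<^sup>* x y}"
    unfolding components_def by blast
  show "is_path_on 2 C {e \<in> path_factor vs. e \<subseteq> C}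
    \<or> is_path_on (2 * k + 1) C {e \<in> path_factor vs. e \<subseteq> C}"
  proof (cases "x \<in> set vs")
    case True
    then have "C = set vs" using C path_factor_component_on_path[OF assms(1)] by simp
    then show ?thesis
      using is_path_on_path_edges[of vs] assms path_factor_edges_on_path
      by (simp add: alternating_path_def)
  next
    case False
    obtain y where "C = {x, y}" "{e \<in> path_factor vs. e \<subseteq> C} = {{x, y}}" "x \<noteq> y"
      by (rule path_factor_component_off_path[OF assms(1), of x]) (use False \<open>x \<in> V\<close> C in auto)
    moreover have "is_path_on 2 {x, y} {{x, y}}"
      unfolding is_path_on_def
      by (rule exI[of _ "[x, y]"]) (use \<open>x \<noteq> y\<close> in \<open>auto simp: less_Suc_eq\<close>)
    ultimately show ?thesis by simp
  qed
qed

lemma low_degree_vertex_if_no_path_factor: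
  assumes "\<not> has_path_factor k V E"
  obtains b Q where "b \<in> V" "Q \<subseteq> V - {b}" "card Q \<le> 2 * k" "\<And>z. {b, z} \<in> E \<Longrightarrow> z \<in> Q"
proof -
  obtain vs where vs: "alternating_path vs" "length vs \<le> 2 * k"
    "\<And>x. {last vs, x} \<in> E \<Longrightarrow> x \<in> set vs"
  proof -
    have "\<nexists>vs. alternating_path vs \<and> length vs = 2 * k + 1"
      using has_path_factor_if_long_alternating_path assms by blast
    then show thesis using alternating_path_long_or_stuck[of k k] that by auto
  qed
  have "last vs \<in> V" using vs(1) by (auto simp: alternating_path_def)
  moreover have "set vs - {last vs} \<subseteq> V - {last vs}"
    using vs(1) by (auto simp: alternating_path_def)
  moreover have "card (set vs - {last vs}) \<le> 2 * k"
    using card_length[of vs] vs(2) card_Diff1_le[of "set vs" "last vs"] by linarith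
  moreover have "z \<in> set vs - {last vs}" if "{last vs, z} \<in> E" for z
    using vs(3)[OF that] simple_graph_edge_neq[OF simple that] by blast
  ultimately show thesis by (rule that)
qed

end

theorem proposition3p1:
  fixes k :: nat and V :: "'a set" and E :: "'a set set"
  assumes "k \<ge> 3"
    and "simple_graph V E"
    and "hypomatchable V E"
    and "card V \<ge> 2*k+1"
    and "\<not> has_path_factor k V E"
  shows "\<exists>X. X \<subseteq> V \<and> card X \<ge> 5 \<and>
     real (\<Sum>j<k. comp_count (2*j+1) (V - X) (del_verts_E X E)) \<ge> real (card X) / real (k^2)"
proof -
  let ?c = "\<lambda>X j. comp_count j (V - X) (del_verts_E X E)"
  have "finite V" using assms(2) by (simp add: simple_graph_def)
  have "V \<noteq> {}" using assms(4) by auto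
  then obtain v where "v \<in> V" by blast
  then obtain M where "near_perfect_matching V E M v"
    by (rule hypomatchable_near_perfect_matching[OF assms(2,3)])
  then obtain b Q where b: "b \<in> V" and Q: "Q \<subseteq> V - {b}" "card Q \<le> 2 * k"
    and nbrs: "\<And>z. {b, z} \<in> E \<Longrightarrow> z \<in> Q"
    by (rule near_perfect_matching.low_degree_vertex_if_no_path_factor[OF _ assms(5)]) blast
  have "card (V - {b}) = card V - 1" using b \<open>finite V\<close> by simp
  then have "max 5 (card Q) \<le> card (V - {b})" using assms(1,4) Q(2) by linarith
  then obtain X where X: "Q \<subseteq> X" "X \<subseteq> V - {b}" "card X = max 5 (card Q)"
    using exists_subset_between[of Q "max 5 (card Q)" "V - {b}"] Q(1) \<open>finite V\<close> by auto
  have "1 \<le> ?c X 1"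
    using isolated_vertex_comp_count[OF assms(2), of b X] b X(1,2) nbrs by blast
  also have "\<dots> \<le> (\<Sum>j<k. ?c X (2 * j + 1))"
    using member_le_sum[of 0 "{..<k}" "\<lambda>j. ?c X (2 * j + 1)"] assms(1) by simp
  finally have sum_ge_1: "1 \<le> (\<Sum>j<k. ?c X (2 * j + 1))" .
  have "3 * k \<le> k^2" using mult_le_mono1[OF assms(1), of k] by (simp add: power2_eq_square)
  then have "card X \<le> k^2" using X(3) Q(2) assms(1) by (simp add: max_def)
  then have "real (card X) / real (k^2) \<le> 1" using assms(1) by (simp add: divide_le_eq)
  also have "1 \<le> real (\<Sum>j<k. ?c X (2 * j + 1))"
    using sum_ge_1 by (metis of_nat_1 of_nat_le_iff)
  finally show ?thesis using X(2,3) by auto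
qed

end
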